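(* Let $m\ge 2$ and let $\mathcal{R}_m^4$ be the rose graph with $N_m=3m+1$ nodes. For the NBCRW on $\mathcal{R}_m^4$, the stationary probability of the hub node, of any internal node, and of any peripheral node are respectively $$\pi_{\mathrm H}^{\mathrm B}=\frac{m}{2(m+\sqrt{2m-1})}=\frac{N_m-1}{2(N_m-1)+2\sqrt{6N_m-15}},\qquad \pi_{\mathrm I}^{\mathrm B}=\frac{1}{4m}=\frac{3}{4(N_m-1)},$$ $$\pi_{\mathrm P}^{\mathrm B}=\frac{m\sqrt{2m-1}-2m+1}{2m(m-1)^2}=\frac{3(N_m-1)\sqrt{6N_m-15}-18N_m+45}{2(N_m-1)(N_m-4)^2}.$$
   Context: The rose graph $\mathcal{R}_m^4$ ($m\ge2$) is obtained by gluing $m$ cycles of length 4 at a single common node, the hub. It has $3m+1$ nodes and $4m$ edges. In each 4-cycle (petal), the two neighbours of the hub are internal nodes and the node opposite the hub is the peripheral node. The non-backtracking matrix $\mathbf{B}$ of a graph is the matrix indexed by directed edges $i\to j$ (each undirected edge gives two directed edges), with $B_{i\to j,\,k\to l}=1$ if $j=k$ and $i\neq l$, and $0$ otherwise; $v=(v_{i\to j})$ is a non-negative eigenvector for its leading (Perron–Frobenius) eigenvalue, and the non-backtracking centrality of node $i$ is $x_i=\sum_{j\in\mathcal{N}_i}v_{i\to j}$. The non-backtracking centrality based random walk (NBCRW) is the Markov chain on nodes with transition probabilities $p_{ij}=a_{ij}x_j/\sum_k a_{ik}x_k$, $(a_{ij})$ the adjacency matrix; its stationary distribution is the probability vector $\pi$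 with $\pi\mathbf{P}=\pi$. *)

theory Defs
  imports Complex_Main
begin

text \<open>Rose graph R_m^4 on nodes {0..3m}: hub 0; petal k (k < m) has internal
  nodes 3k+1, 3k+2 and peripheral node 3k+3; edges hub--3k+1, hub--3k+2,
  3k+1--3k+3, 3k+2--3k+3.\<close>

definition rose_nodes :: "nat \<Rightarrow> nat set" where
  "rose_nodes m = {0..3*m}"

definition rose_adj :: "nat \<Rightarrow> nat \<Rightarrow> nat \<Rightarrow> bool" where
  "rose_adj m i j \<longleftrightarrow> (\<exists>k<m. {i,j} = {0, 3*k+1} \<or> {i,j} = {0, 3*k+2}
                              \<or> {i,j} = {3*k+1, 3*k+3} \<or> {i,j} = {3*k+2, 3*k+3})"

definition rose_dedges :: "nat \<Rightarrow> (nat \<times> nat) set" where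
  "rose_dedges m = {(i,j). i \<in> rose_nodes m \<and> j \<in> rose_nodes m \<and> rose_adj m i j}"

definition nb_entry :: "nat \<times> nat \<Rightarrow> nat \<times> nat \<Rightarrow> 'a::zero_neq_one" where
  "nb_entry e f = (if snd e = fst f \<and> fst e \<noteq> snd f then 1 else 0)"

definition nb_eigenpair :: "nat \<Rightarrow> 'a::field \<Rightarrow> (nat \<times> nat \<Rightarrow> 'a) \<Rightarrow> bool" where
  "nb_eigenpair m mu w \<longleftrightarrow> (\<exists>e\<in>rose_dedges m. w e \<noteq> 0) \<and>
     (\<forall>e\<in>rose_dedges m. (\<Sum>f\<in>rose_dedges m. nb_entry e f * w f) = mu * w e)"

definition nb_perron :: "nat \<Rightarrow> real \<Rightarrow> (nat \<times> nat \<Rightarrow> real) \<Rightarrow> bool" where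
  "nb_perron m lam v \<longleftrightarrow> nb_eigenpair m lam v \<and> (\<forall>e\<in>rose_dedges m. v e \<ge> 0) \<and>
     (\<forall>mu w. nb_eigenpair m (mu::complex) w \<longrightarrow> cmod mu \<le> lam)"

definition nb_centrality :: "nat \<Rightarrow> (nat \<times> nat \<Rightarrow> real) \<Rightarrow> nat \<Rightarrow> real" where
  "nb_centrality m v i = (\<Sum>j\<in>rose_nodes m. if rose_adj m i j then v (i,j) else 0)"

definition nbcrw_P :: "nat \<Rightarrow> (nat \<times> nat \<Rightarrow> real) \<Rightarrow> nat \<Rightarrow> nat \<Rightarrow> real" where
  "nbcrw_P m v i j =
     (if rose_adj m i j then nb_centrality m v j else 0) /
     (\<Sum>k\<in>rose_nodes m. if rose_adj m i k then nb_centrality m v k else 0)"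

definition stationary :: "nat \<Rightarrow> (nat \<Rightarrow> nat \<Rightarrow> real) \<Rightarrow> (nat \<Rightarrow> real) \<Rightarrow> bool" where
  "stationary m P p \<longleftrightarrow> (\<forall>i\<in>rose_nodes m. p i \<ge> 0) \<and> (\<Sum>i\<in>rose_nodes m. p i) = 1 \<and>
     (\<forall>j\<in>rose_nodes m. (\<Sum>i\<in>rose_nodes m. p i * P i j) = p j)"

end

theory Submission
  imports Defs
begin

text \<open>Write \<open>X\<^sub>k\<close>, \<open>Y\<^sub>k\<close> for the values of the eigenvector \<open>v\<close> on the two edges leaving the hub
  into petal \<open>k\<close>, and \<open>S = \<Sum>\<^sub>k (X\<^sub>k + Y\<^sub>k)\<close> for the hub centrality. The eigen
  equation \<open>\<lambda> v(i\<rightarrow>j) = x\<^sub>j - v(j\<rightarrow>i)\<close> propagates \<open>X\<^sub>k\<close> around the directed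
  4-cycle of the petal as \<open>\<lambda>X\<^sub>k, \<lambda>\<^sup>2X\<^sub>k, \<lambda>\<^sup>3X\<^sub>k\<close>, and closing the cycle at the hub gives
  \<open>\<lambda>\<^sup>4X\<^sub>k = S - Y\<^sub>k\<close>, \<open>\<lambda>\<^sup>4Y\<^sub>k = S - X\<^sub>k\<close>. Summing over the petals, and using \<open>S > 0\<close>
  by non-negativity, yields \<open>\<lambda>\<^sup>4 = 2m - 1\<close> and \<open>X\<^sub>k = Y\<^sub>k = S/(2m)\<close>. All centralities are
  then explicit: the walk goes from the hub to each internal node with probability \<open>1/(2m)\<close>,
  from a peripheral node to each of its neighbours with probability \<open>1/2\<close>, and from an
  internal node to the peripheral one with probability \<open>\<beta> = r/(m + r)\<close>, \<open>r = \<lambda>\<^sup>2 = \<surd>(2m-1)\<close>.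
  The balance equations of a petal and the normalisation then give
  \<open>\<pi>\<^sub>H = (1 - \<beta>)/2\<close>, \<open>\<pi>\<^sub>I = 1/(4m)\<close>, \<open>\<pi>\<^sub>P = \<beta>/(2m)\<close>.\<close>

lemma rose_adj_sym: "rose_adj m i j \<longleftrightarrow> rose_adj m j i"
  by (auto simp: rose_adj_def insert_commute)

lemma rose_adj_le: "rose_adj m i j \<Longrightarrow> i \<le> 3*m \<and> j \<le> 3*m"
  unfolding rose_adj_def doubleton_eq_iff by (auto; presburger)

lemma rose_adj_petal [simp]:
  "\<not> rose_adj m 0 0"
  "rose_adj m 0 (3*k+1) \<longleftrightarrow> k < m"
  "rose_adj m 0 (3*k+2) \<longleftrightarrow> k < m"
  "\<not> rose_adj m 0 (3*k+3)"
  "rose_adj m (3*k+1) 0 \<longleftrightarrow> k < m"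
  "rose_adj m (3*k+2) 0 \<longleftrightarrow> k < m"
  "\<not> rose_adj m (3*k+3) 0"
  "\<not> rose_adj m (3*k+1) (3*k'+1)"
  "\<not> rose_adj m (3*k+1) (3*k'+2)"
  "rose_adj m (3*k+1) (3*k'+3) \<longleftrightarrow> k' = k \<and> k < m"
  "\<not> rose_adj m (3*k+2) (3*k'+1)"
  "\<not> rose_adj m (3*k+2) (3*k'+2)"
  "rose_adj m (3*k+2) (3*k'+3) \<longleftrightarrow> k' = k \<and> k < m"
  "rose_adj m (3*k+3) (3*k'+1) \<longleftrightarrow> k' = k \<and> k < m"
  "rose_adj m (3*k+3) (3*k'+2) \<longleftrightarrow> k' = k \<and> k < m"
  "\<not> rose_adj m (3*k+3) (3*k'+3)"
  unfolding rose_adj_def doubleton_eq_iff by (auto; presburger)+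

(* The simplifier normalises 3*k+1 to Suc (3*k); the normalised forms are needed as well. *)
declare rose_adj_petal [simplified, simp]

lemma rose_dedgesI: "rose_adj m i j \<Longrightarrow> (i,j) \<in> rose_dedges m"
  using rose_adj_le[of m i j] by (auto simp: rose_dedges_def rose_nodes_def)

lemma rose_adj_cases:
  assumes "rose_adj m i j"
  obtains k where "k < m" and "(i,j) \<in> {(0, 3*k+1), (3*k+1, 0), (0, 3*k+2), (3*k+2, 0),
    (3*k+1, 3*k+3), (3*k+3, 3*k+1), (3*k+2, 3*k+3), (3*k+3, 3*k+2)}"
  using assms unfolding rose_adj_def doubleton_eq_iff by blast

lemma sum_rose_nodes:
  "(\<Sum>i\<in>rose_nodes m. f i) = f 0 + (\<Sum>k<m. f (3*k+1) + f (3*k+2) + f (3*k+3))"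
  unfolding rose_nodes_def
proof (induction m)
  case (Suc m)
  have split: "3 * Suc m = Suc (Suc (Suc (3*m)))" and "3*m+3 = Suc (Suc (Suc (3*m)))"
    by simp_all
  show ?case
    unfolding split using Suc by (simp add: sum.atLeast0_atMost_Suc add.assoc \<open>3*m+3 = _\<close>)
qed simp

lemma sum_neighbours_hub:
  "(\<Sum>l\<in>rose_nodes m. if rose_adj m 0 l then g l else 0) = (\<Sum>k<m. g (3*k+1) + g (3*k+2))"
  unfolding sum_rose_nodes by simp

lemma sum_neighbours_petal:
  assumes "k < m"
  shows "(\<Sum>l\<in>rose_nodes m. if rose_adj m (3*k+1) l then g l else 0) = g 0 + g (3*k+3)"
    and "(\<Sum>l\<in>rose_nodes m. if rose_adj m (3*k+2) l then g l else 0) = g 0 + g (3*k+3)"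
    and "(\<Sum>l\<in>rose_nodes m. if rose_adj m (3*k+3) l then g l else 0) = g (3*k+1) + g (3*k+2)"
  using assms unfolding sum_rose_nodes by (simp_all add: sum.distrib)

lemma sum_nb_entry:
  assumes "j \<in> rose_nodes m"
  shows "(\<Sum>f\<in>rose_dedges m. nb_entry (i,j) f * w f)
       = (\<Sum>l\<in>rose_nodes m. if rose_adj m j l \<and> l \<noteq> i then w (j,l) else (0::'a::field))"
proof -
  let ?N = "rose_nodes m"
  have fin: "finite ?N" by (simp add: rose_nodes_def)
  have "rose_dedges m = Sigma ?N (\<lambda>a. {l\<in>?N. rose_adj m a l})"
    by (auto simp: rose_dedges_def)
  then have "(\<Sum>f\<in>rose_dedges m. nb_entry (i,j) f * w f)
      = (\<Sum>a\<in>?N. \<Sum>l\<in>{l\<in>?N. rose_adj m a l}. nb_entry (i,j) (a,l) * w (a,l))"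
    using fin by (simp add: sum.Sigma)
  also have "\<dots> = (\<Sum>a\<in>?N. if a = j
      then (\<Sum>l\<in>{l\<in>?N. rose_adj m j l}. if l \<noteq> i then w (j,l) else 0) else 0)"
    by (intro sum.cong) (auto simp: nb_entry_def intro!: sum.cong)
  also have "\<dots> = (\<Sum>l\<in>{l\<in>?N. rose_adj m j l}. if l \<noteq> i then w (j,l) else 0)"
    using assms fin by simp
  also have "\<dots> = (\<Sum>l\<in>?N. if rose_adj m j l \<and> l \<noteq> i then w (j,l) else 0)"
    using fin by (simp add: sum.inter_filter) (intro sum.cong; simp)
  finally show ?thesis .
qed

lemma nb_eigenpair_edge:
  fixes w :: "nat \<times> nat \<Rightarrow> real"
  assumes "nb_eigenpair m mu w" and "rose_adj m i j"
  shows "mu * w (i,j) = nb_centrality m w j - w (j,i)"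
proof -
  have i: "i \<in> rose_nodes m" and j: "j \<in> rose_nodes m"
    using rose_adj_le[OF assms(2)] by (auto simp: rose_nodes_def)
  have "mu * w (i,j) = (\<Sum>f\<in>rose_dedges m. nb_entry (i,j) f * w f)"
    using assms(1) rose_dedgesI[OF assms(2)] unfolding nb_eigenpair_def by simp
  also have "\<dots> = (\<Sum>l\<in>rose_nodes m. if rose_adj m j l \<and> l \<noteq> i then w (j,l) else 0)"
    using sum_nb_entry[OF j] .
  also have "\<dots> = (\<Sum>l\<in>rose_nodes m.
      (if rose_adj m j l then w (j,l) else 0) - (if l = i then w (j,i) else 0))"
    using assms(2) rose_adj_sym by (intro sum.cong) auto
  also have "\<dots> = nb_centrality m w j - w (j,i)"
    using i by (simp add: sum_subtractf nb_centrality_def rose_nodes_def)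
  finally show ?thesis .
qed

lemma nb_centrality_hub:
  "nb_centrality m w 0 = (\<Sum>k<m. w (0, 3*k+1) + w (0, 3*k+2))"
  unfolding nb_centrality_def by (rule sum_neighbours_hub)

lemma nb_centrality_petal:
  assumes "k < m"
  shows "nb_centrality m w (3*k+1) = w (3*k+1, 0) + w (3*k+1, 3*k+3)"
    and "nb_centrality m w (3*k+2) = w (3*k+2, 0) + w (3*k+2, 3*k+3)"
    and "nb_centrality m w (3*k+3) = w (3*k+3, 3*k+1) + w (3*k+3, 3*k+2)"
  unfolding nb_centrality_def by (rule sum_neighbours_petal[OF assms])+

lemma nb_eigenvector_petal:
  fixes v :: "nat \<times> nat \<Rightarrow> real"
  assumes eig: "nb_eigenpair m lam v" and k: "k < m"
  shows "v (3*k+1, 3*k+3) = lam * v (0, 3*k+1)"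
    and "v (3*k+3, 3*k+2) = lam^2 * v (0, 3*k+1)"
    and "v (3*k+2, 0) = lam^3 * v (0, 3*k+1)"
    and "v (3*k+2, 3*k+3) = lam * v (0, 3*k+2)"
    and "v (3*k+3, 3*k+1) = lam^2 * v (0, 3*k+2)"
    and "v (3*k+1, 0) = lam^3 * v (0, 3*k+2)"
    and "lam^4 * v (0, 3*k+1) = nb_centrality m v 0 - v (0, 3*k+2)"
    and "lam^4 * v (0, 3*k+2) = nb_centrality m v 0 - v (0, 3*k+1)"
proof -
  note edge = nb_eigenpair_edge[OF eig] and cent = nb_centrality_petal[OF k]
  have a: "v (3*k+1, 3*k+3) = lam * v (0, 3*k+1)"
    and ac: "v (3*k+3, 3*k+2) = lam * v (3*k+1, 3*k+3)"
    and cb: "v (3*k+2, 0) = lam * v (3*k+3, 3*k+2)"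
    and b0: "lam * v (3*k+2, 0) = nb_centrality m v 0 - v (0, 3*k+2)"
    and b: "v (3*k+2, 3*k+3) = lam * v (0, 3*k+2)"
    and bc: "v (3*k+3, 3*k+1) = lam * v (3*k+2, 3*k+3)"
    and ca: "v (3*k+1, 0) = lam * v (3*k+3, 3*k+1)"
    and a0: "lam * v (3*k+1, 0) = nb_centrality m v 0 - v (0, 3*k+1)"
    using k edge[of 0 "3*k+1"] edge[of "3*k+1" "3*k+3"] edge[of "3*k+3" "3*k+2"]
      edge[of "3*k+2" 0] edge[of 0 "3*k+2"] edge[of "3*k+2" "3*k+3"]
      edge[of "3*k+3" "3*k+1"] edge[of "3*k+1" 0] cent
    by simp_all
  show "v (3*k+1, 3*k+3) = lam * v (0, 3*k+1)"
    and "v (3*k+3, 3*k+2) = lam^2 * v (0, 3*k+1)"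
    and "v (3*k+2, 0) = lam^3 * v (0, 3*k+1)"
    and "v (3*k+2, 3*k+3) = lam * v (0, 3*k+2)"
    and "v (3*k+3, 3*k+1) = lam^2 * v (0, 3*k+2)"
    and "v (3*k+1, 0) = lam^3 * v (0, 3*k+2)"
    unfolding cb ca ac bc a b by (simp_all add: power2_eq_square power3_eq_cube)
  show "lam^4 * v (0, 3*k+1) = nb_centrality m v 0 - v (0, 3*k+2)"
    and "lam^4 * v (0, 3*k+2) = nb_centrality m v 0 - v (0, 3*k+1)"
    unfolding b0[symmetric] a0[symmetric] cb ca ac bc a b by (simp_all add: power4_eq_xxxx)
qed

lemma nb_centrality_hub_pos:
  fixes v :: "nat \<times> nat \<Rightarrow> real"
  assumes eig: "nb_eigenpair m lam v" and nonneg: "\<forall>e\<in>rose_dedges m. v e \<ge> 0"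
  shows "nb_centrality m v 0 > 0"
proof (rule ccontr)
  have nn: "v (0, 3*k+1) \<ge> 0" "v (0, 3*k+2) \<ge> 0" if "k < m" for k
    using that nonneg rose_dedgesI[of m 0] by simp_all
  assume "\<not> nb_centrality m v 0 > 0"
  moreover have "(\<Sum>k<m. v (0, 3*k+1) + v (0, 3*k+2)) \<ge> 0"
    using nn by (intro sum_nonneg) (simp add: add_nonneg_nonneg)
  ultimately have "(\<Sum>k<m. v (0, 3*k+1) + v (0, 3*k+2)) = 0"
    unfolding nb_centrality_hub by linarith
  then have "\<forall>k<m. v (0, 3*k+1) + v (0, 3*k+2) = 0"
    using nn by (subst (asm) sum_nonneg_eq_0_iff) (auto simp: add_nonneg_nonneg)
  then have hub_zero: "v (0, 3*k+1) = 0" "v (0, 3*k+2) = 0" if "k < m" for k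
    using that nn[OF that] by auto
  obtain i j where ij: "(i,j) \<in> rose_dedges m" "v (i,j) \<noteq> 0"
    using eig unfolding nb_eigenpair_def by auto
  then have "rose_adj m i j" by (simp add: rose_dedges_def)
  then obtain k where "k < m" and "(i,j) \<in> {(0, 3*k+1), (3*k+1, 0), (0, 3*k+2), (3*k+2, 0),
    (3*k+1, 3*k+3), (3*k+3, 3*k+1), (3*k+2, 3*k+3), (3*k+3, 3*k+2)}"
    by (rule rose_adj_cases)
  with ij(2) hub_zero[of k] nb_eigenvector_petal[OF eig, of k] show False by auto
qed

lemma nb_eigenvalue_fourth_power:
  fixes v :: "nat \<times> nat \<Rightarrow> real"
  assumes eig: "nb_eigenpair m lam v" and hub: "nb_centrality m v 0 \<noteq> 0"
  shows "lam^4 = 2 * real m - 1"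
proof -
  let ?S = "nb_centrality m v 0"
  have "lam^4 * ?S = (\<Sum>k<m. lam^4 * v (0, 3*k+1) + lam^4 * v (0, 3*k+2))"
    unfolding nb_centrality_hub by (simp add: sum_distrib_left algebra_simps)
  also have "\<dots> = (\<Sum>k<m. 2 * ?S - (v (0, 3*k+1) + v (0, 3*k+2)))"
    using nb_eigenvector_petal(7,8)[OF eig] by (intro sum.cong) auto
  also have "\<dots> = 2 * real m * ?S - ?S"
    unfolding sum_subtractf nb_centrality_hub[of m v, symmetric] by simp
  also have "\<dots> = (2 * real m - 1) * ?S"
    by (simp add: algebra_simps)
  finally show ?thesis using hub by simp
qed

lemma nb_eigenvector_hub_uniform:
  fixes v :: "nat \<times> nat \<Rightarrow> real"
  assumes eig: "nb_eigenpair m lam v" and lam: "lam^4 = 2 * real m - 1"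
    and m: "m \<ge> 2" and k: "k < m"
  shows "v (0, 3*k+1) = nb_centrality m v 0 / (2 * real m)"
    and "v (0, 3*k+2) = nb_centrality m v 0 / (2 * real m)"
proof -
  have X: "(2 * real m - 1) * v (0, 3*k+1) = nb_centrality m v 0 - v (0, 3*k+2)"
    and Y: "(2 * real m - 1) * v (0, 3*k+2) = nb_centrality m v 0 - v (0, 3*k+1)"
    using nb_eigenvector_petal(7,8)[OF eig k] lam by simp_all
  then have "(2 * real m - 2) * (v (0, 3*k+1) - v (0, 3*k+2)) = 0"
    by (simp add: algebra_simps)
  then have "v (0, 3*k+1) = v (0, 3*k+2)" using m by simp
  with X m show "v (0, 3*k+1) = nb_centrality m v 0 / (2 * real m)"
    and "v (0, 3*k+2) = nb_centrality m v 0 / (2 * real m)"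
    by (simp_all add: field_simps)
qed

lemma nb_perron_centrality:
  fixes v :: "nat \<times> nat \<Rightarrow> real"
  assumes perron: "nb_perron m lam v" and m: "m \<ge> 2"
  defines "c \<equiv> nb_centrality m v 0 / (2 * real m)"
  shows "lam > 0" and "lam^2 = sqrt (2 * real m - 1)" and "c > 0"
    and "\<forall>k<m. nb_centrality m v (3*k+1) = (lam^3 + lam) * c
              \<and> nb_centrality m v (3*k+2) = (lam^3 + lam) * c
              \<and> nb_centrality m v (3*k+3) = 2 * lam^2 * c"
proof -
  have eig: "nb_eigenpair m lam v" and nonneg: "\<forall>e\<in>rose_dedges m. v e \<ge> 0"
    using perron unfolding nb_perron_def by simp_all
  have hub: "nb_centrality m v 0 > 0" by (rule nb_centrality_hub_pos[OF eig nonneg])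
  then show c: "c > 0" using m by (simp add: c_def)
  have lam4: "lam^4 = 2 * real m - 1" using nb_eigenvalue_fourth_power[OF eig] hub by simp
  have uniform: "v (0, 3*k+1) = c" "v (0, 3*k+2) = c" if "k < m" for k
    using nb_eigenvector_hub_uniform[OF eig lam4 m that] by (simp_all add: c_def)
  note petal = nb_eigenvector_petal[OF eig]
  have "(3*0+1, 3*0+3) \<in> rose_dedges m"
    using m by (intro rose_dedgesI) (subst rose_adj_petal(10); simp)
  then have "lam * c \<ge> 0"
    using nonneg petal(1)[of 0] uniform[of 0] m by fastforce
  moreover have "lam \<noteq> 0" using lam4 m by auto
  ultimately show lam: "lam > 0" using c by (simp add: zero_le_mult_iff)
  have "(lam^2)^2 = 2 * real m - 1" using lam4 by (simp flip: power_mult)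
  then show "lam^2 = sqrt (2 * real m - 1)"
    using lam by (intro real_sqrt_unique[symmetric]) simp_all
  show "\<forall>k<m. nb_centrality m v (3*k+1) = (lam^3 + lam) * c
              \<and> nb_centrality m v (3*k+2) = (lam^3 + lam) * c
              \<and> nb_centrality m v (3*k+3) = 2 * lam^2 * c"
    using petal uniform nb_centrality_petal by (simp add: algebra_simps)
qed

lemma nbcrw_P_rose:
  assumes k: "k < m"
    and cent: "\<forall>k<m. nb_centrality m v (3*k+1) = xI \<and> nb_centrality m v (3*k+2) = xI
                    \<and> nb_centrality m v (3*k+3) = xP"
    and xI: "xI \<noteq> 0"
  shows "nbcrw_P m v 0 (3*k+1) = 1 / (2 * real m)"
    and "nbcrw_P m v 0 (3*k+2) = 1 / (2 * real m)"
    and "nbcrw_P m v (3*k+3) (3*k+1) = 1 / 2"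
    and "nbcrw_P m v (3*k+3) (3*k+2) = 1 / 2"
    and "nbcrw_P m v (3*k+1) (3*k+3) = xP / (nb_centrality m v 0 + xP)"
    and "nbcrw_P m v (3*k+2) (3*k+3) = xP / (nb_centrality m v 0 + xP)"
proof -
  let ?x = "nb_centrality m v"
  have "(\<Sum>l\<in>rose_nodes m. if rose_adj m 0 l then ?x l else 0) = (\<Sum>k<m. xI + xI)"
    unfolding sum_neighbours_hub using cent by (intro sum.cong) auto
  then have hub: "(\<Sum>l\<in>rose_nodes m. if rose_adj m 0 l then ?x l else 0) = 2 * real m * xI"
    by simp
  show "nbcrw_P m v 0 (3*k+1) = 1 / (2 * real m)"
    and "nbcrw_P m v 0 (3*k+2) = 1 / (2 * real m)"
    and "nbcrw_P m v (3*k+3) (3*k+1) = 1 / 2"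
    and "nbcrw_P m v (3*k+3) (3*k+2) = 1 / 2"
    and "nbcrw_P m v (3*k+1) (3*k+3) = xP / (nb_centrality m v 0 + xP)"
    and "nbcrw_P m v (3*k+2) (3*k+3) = xP / (nb_centrality m v 0 + xP)"
    unfolding nbcrw_P_def hub sum_neighbours_petal[OF k] using k cent xI by simp_all
qed

lemma stationary_neighbour_sum:
  assumes "stationary m P p" and "\<forall>i j. \<not> rose_adj m i j \<longrightarrow> P i j = 0"
    and "j \<in> rose_nodes m"
  shows "p j = (\<Sum>i\<in>rose_nodes m. if rose_adj m j i then p i * P i j else 0)"
proof -
  have "p j = (\<Sum>i\<in>rose_nodes m. p i * P i j)"
    using assms(1,3) unfolding stationary_def by simp
  also have "\<dots> = (\<Sum>i\<in>rose_nodes m. if rose_adj m j i then p i * P i j else 0)"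
    using assms(2) rose_adj_sym by (intro sum.cong) auto
  finally show ?thesis .
qed

lemma stationary_rose:
  fixes P :: "nat \<Rightarrow> nat \<Rightarrow> real"
  assumes st: "stationary m P p" and P0: "\<forall>i j. \<not> rose_adj m i j \<longrightarrow> P i j = 0"
    and P: "\<forall>k<m. P 0 (3*k+1) = 1 / (2 * real m) \<and> P 0 (3*k+2) = 1 / (2 * real m)
               \<and> P (3*k+3) (3*k+1) = 1 / 2 \<and> P (3*k+3) (3*k+2) = 1 / 2
               \<and> P (3*k+1) (3*k+3) = \<beta> \<and> P (3*k+2) (3*k+3) = \<beta>"
    and m: "m > 0" and \<beta>: "\<beta> \<noteq> 1"
  shows "p 0 = (1 - \<beta>) / 2"
    and "\<forall>k<m. p (3*k+1) = 1 / (4 * real m) \<and> p (3*k+2) = 1 / (4 * real m)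
              \<and> p (3*k+3) = \<beta> / (2 * real m)"
proof -
  define h where "h = p 0 / (2 * real m)"
  define q where "q = h / (1 - \<beta>)"
  have petal: "p (3*k+1) = q \<and> p (3*k+2) = q \<and> p (3*k+3) = 2 * \<beta> * q" if k: "k < m" for k
  proof -
    have nodes: "3*k+1 \<in> rose_nodes m" "3*k+2 \<in> rose_nodes m" "3*k+3 \<in> rose_nodes m"
      using k by (auto simp: rose_nodes_def)
    have a: "p (3*k+1) = h + p (3*k+3) / 2"
      and b: "p (3*k+2) = h + p (3*k+3) / 2"
      and c: "p (3*k+3) = \<beta> * (p (3*k+1) + p (3*k+2))"
      using stationary_neighbour_sum[OF st P0 nodes(1)] stationary_neighbour_sum[OF st P0 nodes(2)]
        stationary_neighbour_sum[OF st P0 nodes(3)] P k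
      unfolding sum_neighbours_petal[OF k] h_def by (simp_all add: algebra_simps)
    then have "p (3*k+1) * (1 - \<beta>) = h"
      by (simp add: algebra_simps)
    then have "p (3*k+1) = q" using \<beta> by (simp add: q_def field_simps)
    with a b c show ?thesis by simp
  qed
  have "1 = p 0 + (\<Sum>k<m. p (3*k+1) + p (3*k+2) + p (3*k+3))"
    using st unfolding stationary_def sum_rose_nodes by simp
  also have "\<dots> = p 0 + (\<Sum>k<m. 2 * (1 + \<beta>) * q)"
    using petal by (intro arg_cong[where f="\<lambda>s. p 0 + s"] sum.cong) (auto simp: algebra_simps)
  also have "\<dots> = 2 * p 0 / (1 - \<beta>)"
    using m \<beta> by (simp add: q_def h_def field_simps)
  finally show p0: "p 0 = (1 - \<beta>) / 2"
    using \<beta> by (simp add: field_simps)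
  have "q = 1 / (4 * real m)" using m \<beta> by (simp add: q_def h_def p0 field_simps)
  with petal show "\<forall>k<m. p (3*k+1) = 1 / (4 * real m) \<and> p (3*k+2) = 1 / (4 * real m)
              \<and> p (3*k+3) = \<beta> / (2 * real m)"
    by simp
qed

lemma nbcrw_P_perron:
  fixes v :: "nat \<times> nat \<Rightarrow> real"
  assumes perron: "nb_perron m lam v" and m: "m \<ge> 2"
  defines "\<beta> \<equiv> sqrt (2 * real m - 1) / (real m + sqrt (2 * real m - 1))"
  shows "\<forall>k<m. nbcrw_P m v 0 (3*k+1) = 1 / (2 * real m)
      \<and> nbcrw_P m v 0 (3*k+2) = 1 / (2 * real m)
      \<and> nbcrw_P m v (3*k+3) (3*k+1) = 1 / 2 \<and> nbcrw_P m v (3*k+3) (3*k+2) = 1 / 2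
      \<and> nbcrw_P m v (3*k+1) (3*k+3) = \<beta> \<and> nbcrw_P m v (3*k+2) (3*k+3) = \<beta>"
proof -
  let ?r = "sqrt (2 * real m - 1)"
  define c where "c = nb_centrality m v 0 / (2 * real m)"
  have lam: "lam > 0" "lam^2 = ?r" "c > 0"
    and cent: "\<forall>k<m. nb_centrality m v (3*k+1) = (lam^3 + lam) * c
        \<and> nb_centrality m v (3*k+2) = (lam^3 + lam) * c \<and> nb_centrality m v (3*k+3) = 2 * lam^2 * c"
    using nb_perron_centrality[OF perron m] unfolding c_def by blast+
  have "nb_centrality m v 0 = 2 * real m * c" using m by (simp add: c_def)
  then have "2 * lam^2 * c / (nb_centrality m v 0 + 2 * lam^2 * c)
      = (2 * c * ?r) / (2 * c * (real m + ?r))"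
    unfolding lam(2) by (simp add: algebra_simps)
  also have "\<dots> = \<beta>" using lam(3) by (simp add: \<beta>_def)
  finally have "2 * lam^2 * c / (nb_centrality m v 0 + 2 * lam^2 * c) = \<beta>" .
  moreover have "(lam^3 + lam) * c \<noteq> 0"
    using lam by (metis add_pos_pos mult_pos_pos zero_less_power less_irrefl)
  ultimately show ?thesis
    using nbcrw_P_rose[OF _ cent] by simp
qed

lemma rose_closed_forms:
  assumes m: "m \<ge> 2"
  defines "r \<equiv> sqrt (2 * real m - 1)" and "N \<equiv> real (3*m+1)"
  shows "real m / (2 * (real m + r)) = (N - 1) / (2 * (N - 1) + 2 * sqrt (6 * N - 15))"
    and "1 / (4 * real m) = 3 / (4 * (N - 1))"
    and "r / (2 * real m * (real m + r))
         = (real m * r - 2 * real m + 1) / (2 * real m * (real m - 1)^2)"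
    and "(real m * r - 2 * real m + 1) / (2 * real m * (real m - 1)^2)
         = (3 * (N - 1) * sqrt (6 * N - 15) - 18 * N + 45) / (2 * (N - 1) * (N - 4)^2)"
proof -
  have r: "r > 0" "r^2 = 2 * real m - 1" using m by (simp_all add: r_def)
  have sqrtN: "sqrt (6 * N - 15) = 3 * r"
  proof -
    have "6 * N - 15 = 3^2 * (2 * real m - 1)" by (simp add: N_def)
    then have "sqrt (6 * N - 15) = sqrt (3^2) * sqrt (2 * real m - 1)"
      by (simp only: real_sqrt_mult)
    then show ?thesis by (simp add: r_def)
  qed
  have N1: "N - 1 = 3 * real m" and N4: "N - 4 = 3 * (real m - 1)" by (simp_all add: N_def)
  show "real m / (2 * (real m + r)) = (N - 1) / (2 * (N - 1) + 2 * sqrt (6 * N - 15))"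
    unfolding sqrtN N1 using r by (simp add: field_simps)
  show "1 / (4 * real m) = 3 / (4 * (N - 1))"
    unfolding N1 using m by simp
  have "(real m * r - 2 * real m + 1) * (real m + r) - r * (real m - 1)^2
      = real m * (r^2 - (2 * real m - 1))"
    by (simp add: algebra_simps power2_eq_square)
  then have "r * (real m - 1)^2 = (real m * r - 2 * real m + 1) * (real m + r)"
    using r(2) by simp
  then have "r * (2 * real m * (real m - 1)^2) = (real m * r - 2 * real m + 1) * (2 * real m * (real m + r))"
    by algebra
  moreover have "2 * real m * (real m + r) \<noteq> 0" "2 * real m * (real m - 1)^2 \<noteq> 0"
    using m r by auto
  ultimately show "r / (2 * real m * (real m + r))
         = (real m * r - 2 * real m + 1) / (2 * real m * (real m - 1)^2)"
    by (metis frac_eq_eq)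
  show "(real m * r - 2 * real m + 1) / (2 * real m * (real m - 1)^2)
         = (3 * (N - 1) * sqrt (6 * N - 15) - 18 * N + 45) / (2 * (N - 1) * (N - 4)^2)"
  proof -
    have num: "3 * (N - 1) * sqrt (6 * N - 15) - 18 * N + 45 = 27 * (real m * r - 2 * real m + 1)"
      unfolding sqrtN N1 by (simp add: N_def algebra_simps)
    have den: "2 * (N - 1) * (N - 4)^2 = 27 * (2 * real m * (real m - 1)^2)"
      unfolding N1 N4 by (simp add: power2_eq_square algebra_simps)
    show ?thesis unfolding num den by (rule mult_divide_mult_cancel_left[symmetric]) simp
  qed
qed

theorem theorem4:
  fixes m :: nat and lam :: real and v :: "nat \<times> nat \<Rightarrow> real" and p :: "nat \<Rightarrow> real"
  assumes "m \<ge> 2"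
    and "nb_perron m lam v"
    and "stationary m (nbcrw_P m v) p"
  defines "N \<equiv> real (3*m+1)"
  shows "p 0 = real m / (2 * (real m + sqrt (2 * real m - 1)))
       \<and> p 0 = (N - 1) / (2 * (N - 1) + 2 * sqrt (6 * N - 15))
       \<and> (\<forall>k<m. p (3*k+1) = 1 / (4 * real m) \<and> p (3*k+2) = 1 / (4 * real m)
                \<and> p (3*k+1) = 3 / (4 * (N - 1)) \<and> p (3*k+2) = 3 / (4 * (N - 1))
                \<and> p (3*k+3) = (real m * sqrt (2 * real m - 1) - 2 * real m + 1)
                                / (2 * real m * (real m - 1)^2)
                \<and> p (3*k+3) = (3 * (N - 1) * sqrt (6 * N - 15) - 18 * N + 45)
                                / (2 * (N - 1) * (N - 4)^2))"
proof -
  let ?r = "sqrt (2 * real m - 1)"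
  define \<beta> where "\<beta> = ?r / (real m + ?r)"
  have m: "m > 0" "real m + ?r > 0" using assms(1) by (simp_all add: add_pos_nonneg)
  have P0: "\<forall>i j. \<not> rose_adj m i j \<longrightarrow> nbcrw_P m v i j = 0"
    by (simp add: nbcrw_P_def)
  have "\<beta> \<noteq> 1" using m by (simp add: \<beta>_def)
  with stationary_rose[OF assms(3) P0 nbcrw_P_perron[OF assms(2,1)] m(1)]
  have "p 0 = (1 - \<beta>) / 2" and "\<forall>k<m. p (3*k+1) = 1 / (4 * real m)
      \<and> p (3*k+2) = 1 / (4 * real m) \<and> p (3*k+3) = \<beta> / (2 * real m)"
    by (simp_all add: \<beta>_def)
  moreover have "(1 - \<beta>) / 2 = real m / (2 * (real m + ?r))"
    and "\<beta> / (2 * real m) = ?r / (2 * real m * (real m + ?r))"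
    using m by (simp_all add: \<beta>_def field_simps)
  ultimately show ?thesis
    using rose_closed_forms[OF assms(1), folded N_def] by metis
qed

end
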